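(* Let $\omega$ be a primitive third root of unity and $\mathcal{C}=\mathbb{C}\langle x,y,z\rangle/(x^2,y^2,z^2,\ zxy+\omega xyz+\omega^2 yzx,\ zxy+\omega^2 xyz+\omega yzx)$. Then the element $g_0=zxy+xyz+yzx$ of $\mathcal{C}$ satisfies $g_0x=xg_0=g_0y=yg_0=g_0z=zg_0=0$. *)

theory Defs
  imports Complex_Main
begin

text \<open>The free associative algebra C<x,y,z>: elements are coefficient functions on words
  over the alphabet {x,y,z}; the product is concatenation-convolution. Elements of
  the ideal below are automatically finitely supported (noncommutative polynomials).\<close>

datatype gen = X | Y | Z

type_synonym ncpoly = "gen list \<Rightarrow> complex"

definition nc_zero :: ncpoly where "nc_zero = (\<lambda>w. 0)"
definition nc_add :: "ncpoly \<Rightarrow> ncpoly \<Rightarrow> ncpoly" where "nc_add p q = (\<lambda>w. p w + q w)"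
definition nc_smult :: "complex \<Rightarrow> ncpoly \<Rightarrow> ncpoly" where "nc_smult c p = (\<lambda>w. c * p w)"
definition nc_mult :: "ncpoly \<Rightarrow> ncpoly \<Rightarrow> ncpoly" where
  "nc_mult p q = (\<lambda>w. \<Sum>i\<le>length w. p (take i w) * q (drop i w))"

definition nc_word :: "gen list \<Rightarrow> ncpoly" where "nc_word u = (\<lambda>w. if w = u then 1 else 0)"

text \<open>Two-sided ideal generated by a set of relations R: smallest set containing R,
  0, closed under addition, scalar multiples, and left/right multiplication by
  words (monomials); together with linearity this is the usual two-sided ideal.\<close>
inductive_set nc_ideal :: "ncpoly set \<Rightarrow> ncpoly set" for R where
  gen: "r \<in> R \<Longrightarrow> r \<in> nc_ideal R"
| zero: "nc_zero \<in> nc_ideal R"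
| add: "p \<in> nc_ideal R \<Longrightarrow> q \<in> nc_ideal R \<Longrightarrow> nc_add p q \<in> nc_ideal R"
| smult: "p \<in> nc_ideal R \<Longrightarrow> nc_smult c p \<in> nc_ideal R"
| lmult: "p \<in> nc_ideal R \<Longrightarrow> nc_mult (nc_word u) p \<in> nc_ideal R"
| rmult: "p \<in> nc_ideal R \<Longrightarrow> nc_mult p (nc_word u) \<in> nc_ideal R"

definition nc_eq_mod :: "ncpoly set \<Rightarrow> ncpoly \<Rightarrow> ncpoly \<Rightarrow> bool" where
  "nc_eq_mod R p q \<longleftrightarrow> nc_add p (nc_smult (-1) q) \<in> nc_ideal R"

definition rels_C :: "complex \<Rightarrow> ncpoly set" where
  "rels_C \<omega> = {nc_word [X,X], nc_word [Y,Y], nc_word [Z,Z],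
     nc_add (nc_word [Z,X,Y]) (nc_add (nc_smult \<omega> (nc_word [X,Y,Z])) (nc_smult (\<omega>^2) (nc_word [Y,Z,X]))),
     nc_add (nc_word [Z,X,Y]) (nc_add (nc_smult (\<omega>^2) (nc_word [X,Y,Z])) (nc_smult \<omega> (nc_word [Y,Z,X])))}"

definition g0 :: ncpoly where
  "g0 = nc_add (nc_word [Z,X,Y]) (nc_add (nc_word [X,Y,Z]) (nc_word [Y,Z,X]))"

end

theory Submission
  imports Defs
begin

text \<open>Write \<open>A, B, C\<close> for the three cyclic words of \<open>g\<^sub>0\<close> (or their products with a letter).
  The two defining relations say \<open>A + \<omega>B + \<omega>\<^sup>2C\<close> and \<open>A + \<omega>\<^sup>2B + \<omega>C\<close> vanish. Since
  \<open>1 + \<omega> + \<omega>\<^sup>2 = 0\<close>, the discrete Fourier transform on these three elements gives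
  \<open>A + B + C = 3A - r\<^sub>1 - r\<^sub>2 = 3B - \<omega>\<^sup>2r\<^sub>1 - \<omega>r\<^sub>2 = 3C - \<omega>r\<^sub>1 - \<omega>\<^sup>2r\<^sub>2\<close>, so the sum vanishes
  as soon as one of the words does. Multiplying \<open>g\<^sub>0\<close> by a letter on either side makes
  exactly one of its three words contain a square \<open>xx\<close>, \<open>yy\<close> or \<open>zz\<close>.\<close>

lemma nc_mult_add_left: "nc_mult (nc_add p q) r = nc_add (nc_mult p r) (nc_mult q r)"
  unfolding nc_mult_def nc_add_def by (auto simp: sum.distrib ring_distribs)

lemma nc_mult_add_right: "nc_mult r (nc_add p q) = nc_add (nc_mult r p) (nc_mult r q)"
  unfolding nc_mult_def nc_add_def by (auto simp: sum.distrib ring_distribs)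

lemma nc_mult_smult_left: "nc_mult (nc_smult c p) r = nc_smult c (nc_mult p r)"
  unfolding nc_mult_def nc_smult_def by (auto simp: sum_distrib_left mult.assoc)

lemma nc_mult_smult_right: "nc_mult r (nc_smult c p) = nc_smult c (nc_mult r p)"
  unfolding nc_mult_def nc_smult_def by (auto simp: sum_distrib_left mult.left_commute)

lemma take_drop_eq_iff:
  assumes "i \<le> length w"
  shows "(take i w = u \<and> drop i w = v) \<longleftrightarrow> (i = length u \<and> w = u @ v)"
  using assms by (metis append_eq_conv_conj length_take min.absorb2)

lemma nc_word_mult: "nc_mult (nc_word u) (nc_word v) = nc_word (u @ v)"
proof (rule ext)
  fix w
  have "nc_mult (nc_word u) (nc_word v) w
      = (\<Sum>i\<le>length w. if i = length u \<and> w = u @ v then 1 else 0)"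
    unfolding nc_mult_def nc_word_def
    by (rule sum.cong) (auto simp: take_drop_eq_iff[symmetric])
  also have "\<dots> = nc_word (u @ v) w"
    unfolding nc_word_def by (cases "w = u @ v") auto
  finally show "nc_mult (nc_word u) (nc_word v) w = nc_word (u @ v) w" .
qed

lemma nc_eq_mod_zero_iff: "nc_eq_mod R p nc_zero \<longleftrightarrow> p \<in> nc_ideal R"
  unfolding nc_eq_mod_def nc_add_def nc_smult_def nc_zero_def by simp

lemma nc_ideal_lincomb:
  assumes "p \<in> nc_ideal R" "q \<in> nc_ideal R" "r \<in> nc_ideal R"
  shows "(\<lambda>w. a * p w + b * q w + c * r w) \<in> nc_ideal R"
proof -
  have "nc_add (nc_add (nc_smult a p) (nc_smult b q)) (nc_smult c r) \<in> nc_ideal R"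
    using assms by (intro nc_ideal.add nc_ideal.smult)
  then show ?thesis
    by (simp add: nc_add_def nc_smult_def)
qed

lemma nc_ideal_word_infix:
  assumes "nc_word s \<in> R"
  shows "nc_word (u @ s @ v) \<in> nc_ideal R"
  using nc_ideal.rmult[OF nc_ideal.lmult[OF nc_ideal.gen[OF assms]], of u v]
  by (simp add: nc_word_mult)

lemma nc_ideal_trinomial_infix:
  assumes "nc_add (nc_word a) (nc_add (nc_smult \<alpha> (nc_word b)) (nc_smult \<beta> (nc_word c)))
             \<in> nc_ideal R"
  shows "nc_add (nc_word (u @ a @ v))
           (nc_add (nc_smult \<alpha> (nc_word (u @ b @ v))) (nc_smult \<beta> (nc_word (u @ c @ v))))
           \<in> nc_ideal R"
  using nc_ideal.rmult[OF nc_ideal.lmult[OF assms], of u v]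
  by (simp add: nc_mult_add_left nc_mult_add_right nc_mult_smult_left nc_mult_smult_right
      nc_word_mult)

lemma cube_root_unity_sum:
  fixes \<omega> :: complex
  assumes "\<omega> ^ 3 = 1" and "\<omega> \<noteq> 1"
  shows "\<omega>\<^sup>2 + \<omega> + 1 = 0"
proof -
  have "(\<omega> - 1) * (\<omega>\<^sup>2 + \<omega> + 1) = \<omega> ^ 3 - 1"
    by (simp add: algebra_simps power2_eq_square power3_eq_cube)
  then show ?thesis
    using assms by simp
qed

lemma omega_trinomial_sum_in_ideal:
  fixes \<omega> :: complex
  assumes \<omega>: "\<omega>\<^sup>2 + \<omega> + 1 = 0"
    and r1: "nc_add A (nc_add (nc_smult \<omega> B) (nc_smult (\<omega>\<^sup>2) C)) \<in> nc_ideal R"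
    and r2: "nc_add A (nc_add (nc_smult (\<omega>\<^sup>2) B) (nc_smult \<omega> C)) \<in> nc_ideal R"
    and "A \<in> nc_ideal R \<or> B \<in> nc_ideal R \<or> C \<in> nc_ideal R"
  shows "nc_add A (nc_add B C) \<in> nc_ideal R"
proof -
  let ?r1 = "nc_add A (nc_add (nc_smult \<omega> B) (nc_smult (\<omega>\<^sup>2) C))"
  let ?r2 = "nc_add A (nc_add (nc_smult (\<omega>\<^sup>2) B) (nc_smult \<omega> C))"
  have combination_in_ideal: "(\<lambda>w. 3 * D w + b * ?r1 w + c * ?r2 w) \<in> nc_ideal R"
    if "D \<in> nc_ideal R" for D b c
    using that r1 r2 by (rule nc_ideal_lincomb)
  consider "A \<in> nc_ideal R" | "B \<in> nc_ideal R" | "C \<in> nc_ideal R"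
    using assms(4) by blast
  then show ?thesis
  proof cases
    case 1
    have "nc_add A (nc_add B C) = (\<lambda>w. 3 * A w + (-1) * ?r1 w + (-1) * ?r2 w)"
      unfolding nc_add_def nc_smult_def by (rule ext) (use \<omega> in algebra)
    then show ?thesis by (simp only:) (rule combination_in_ideal[OF 1])
  next
    case 2
    have "nc_add A (nc_add B C) = (\<lambda>w. 3 * B w + (- \<omega>\<^sup>2) * ?r1 w + (- \<omega>) * ?r2 w)"
      unfolding nc_add_def nc_smult_def by (rule ext) (use \<omega> in algebra)
    then show ?thesis by (simp only:) (rule combination_in_ideal[OF 2])
  next
    case 3
    have "nc_add A (nc_add B C) = (\<lambda>w. 3 * C w + (- \<omega>) * ?r1 w + (- \<omega>\<^sup>2) * ?r2 w)"
      unfolding nc_add_def nc_smult_def by (rule ext) (use \<omega> in algebra)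
    then show ?thesis by (simp only:) (rule combination_in_ideal[OF 3])
  qed
qed

theorem mainTheorem19:
  fixes \<omega> :: complex
  assumes "\<omega> ^ 3 = 1" and "\<omega> \<noteq> 1"
  shows "\<forall>v\<in>{X, Y, Z}.
           nc_eq_mod (rels_C \<omega>) (nc_mult g0 (nc_word [v])) nc_zero \<and>
           nc_eq_mod (rels_C \<omega>) (nc_mult (nc_word [v]) g0) nc_zero"
proof -
  let ?I = "nc_ideal (rels_C \<omega>)"
  have \<omega>: "\<omega>\<^sup>2 + \<omega> + 1 = 0"
    using assms by (rule cube_root_unity_sum)
  have square: "nc_word (u @ [v, v] @ w) \<in> ?I" for u v w
    by (rule nc_ideal_word_infix) (cases v; simp add: rels_C_def)
  have vanish: "nc_add (nc_word (u @ [Z,X,Y] @ w))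
                  (nc_add (nc_word (u @ [X,Y,Z] @ w)) (nc_word (u @ [Y,Z,X] @ w))) \<in> ?I"
    if "nc_word (u @ [Z,X,Y] @ w) \<in> ?I \<or> nc_word (u @ [X,Y,Z] @ w) \<in> ?I
        \<or> nc_word (u @ [Y,Z,X] @ w) \<in> ?I" for u w
    by (rule omega_trinomial_sum_in_ideal[OF \<omega> _ _ that];
        rule nc_ideal_trinomial_infix, rule nc_ideal.gen, simp add: rels_C_def)
  have "nc_mult g0 (nc_word [v]) \<in> ?I \<and> nc_mult (nc_word [v]) g0 \<in> ?I" for v
    using vanish[of "[]" "[v]"] vanish[of "[v]" "[]"]
      square[of "[Y,Z]" X "[]"] square[of "[Z,X]" Y "[]"] square[of "[X,Y]" Z "[]"]
      square[of "[]" X "[Y,Z]"] square[of "[]" Y "[Z,X]"] square[of "[]" Z "[X,Y]"]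
    by (cases v) (simp_all add: g0_def nc_mult_add_left nc_mult_add_right nc_word_mult)
  then show ?thesis
    by (simp add: nc_eq_mod_zero_iff)
qed

end
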